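(* Let $G$ be a finite solvable group, $N$ a minimal normal subgroup of $G$, and $a\in G$. Write $\bar G=G/N$, $\bar a=aN$, and $C_N=\{g\in G\mid [a,g]\in N\}$. Suppose that $$\eta\big(\bar a^{\bar G}(\bar a^{-1})^{\bar G}\big)=\eta\big(a^G(a^{-1})^G\big).$$ Then $N\subseteq \mathbf{C}_G(a)=C_N$. In particular $$\operatorname{dl}\big(G/\operatorname{core}_G(\mathbf{C}_G(a))\big)=\operatorname{dl}\big(\bar G/\operatorname{core}_{\bar G}(\mathbf{C}_{\bar G}(\bar a))\big).$$
   Context: $[x,g]=x^{-1}g^{-1}xg$, $x^g=g^{-1}xg$, $x^L=\{x^l\mid l\in L\}$, and $XY=\{xy\mid x\in X,y\in Y\}$. For a nonempty subset $X$ of a group $L$ that is invariant under conjugation by $L$, $\eta(X)$ is the number of distinct conjugacy classes of $L$ whose union is $X$. For a subgroup $K$ of $L$, $\operatorname{core}_L(K)=\bigcap_{l\in L}l^{-1}Kl$. $\operatorname{dl}$ denotes derived length. *)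

theory Defs
  imports "HOL-Algebra.Algebra"
begin

definition commutator :: "('a, 'b) monoid_scheme \<Rightarrow> 'a \<Rightarrow> 'a \<Rightarrow> 'a" where
  "commutator G x g = inv\<^bsub>G\<^esub> x \<otimes>\<^bsub>G\<^esub> inv\<^bsub>G\<^esub> g \<otimes>\<^bsub>G\<^esub> x \<otimes>\<^bsub>G\<^esub> g"

definition conjclass :: "('a, 'b) monoid_scheme \<Rightarrow> 'a \<Rightarrow> 'a set" where
  "conjclass G x = {inv\<^bsub>G\<^esub> g \<otimes>\<^bsub>G\<^esub> x \<otimes>\<^bsub>G\<^esub> g | g. g \<in> carrier G}"

definition eta_count :: "('a, 'b) monoid_scheme \<Rightarrow> 'a set \<Rightarrow> nat" where
  "eta_count G S = card {conjclass G x | x. x \<in> S}"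

definition centralizer :: "('a, 'b) monoid_scheme \<Rightarrow> 'a \<Rightarrow> 'a set" where
  "centralizer G a = {g \<in> carrier G. a \<otimes>\<^bsub>G\<^esub> g = g \<otimes>\<^bsub>G\<^esub> a}"

definition core :: "('a, 'b) monoid_scheme \<Rightarrow> 'a set \<Rightarrow> 'a set" where
  "core G K = (\<Inter>g \<in> carrier G. (inv\<^bsub>G\<^esub> g) <#\<^bsub>G\<^esub> K #>\<^bsub>G\<^esub> g)"

definition derived_length :: "('a, 'b) monoid_scheme \<Rightarrow> nat" where
  "derived_length G = (LEAST n. (derived G ^^ n) (carrier G) = {\<one>\<^bsub>G\<^esub>})"

definition minimal_normal :: "'a set \<Rightarrow> ('a, 'b) monoid_scheme \<Rightarrow> bool" where
  "minimal_normal N G \<longleftrightarrow> N \<lhd> G \<and> N \<noteq> {\<one>\<^bsub>G\<^esub>} \<and>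
     (\<forall>M. M \<lhd> G \<and> M \<subseteq> N \<longrightarrow> M = {\<one>\<^bsub>G\<^esub>} \<or> M = N)"

end

theory Submission
  imports Defs
begin

text \<open>
  Write S = a^G (a^-1)^G and let p : G -> G/N be the projection. Since p maps each
  conjugacy class of G onto a conjugacy class of G/N, it maps the classes contained in S
  onto those contained in p(S); when both are equally many, it is injective on them.
  Now every commutator [a,g] = (ga)^-1 a (ga) a^-1 lies in S, and so does 1. If [a,g] is
  in N, the classes of [a,g] and of 1 both map to the trivial class, hence coincide, and
  [a,g] = 1. So C_G(a) is the full preimage of C_{G/N}(aN); it contains N as N is normal.
  Cores commute with preimages under surjective homomorphisms, so G/core_G(C_G(a)) is
  isomorphic to (G/N)/core_{G/N}(C_{G/N}(aN)), and isomorphic groups have the same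
  derived length.
\<close>

lemma set_mult_memI:
  fixes G :: "('a, 'b) monoid_scheme" (structure)
  shows "x \<in> H \<Longrightarrow> y \<in> K \<Longrightarrow> x \<otimes> y \<in> H <#> K"
  unfolding set_mult_def by blast

lemma (in group) commutator_closed [simp]:
  "a \<in> carrier G \<Longrightarrow> g \<in> carrier G \<Longrightarrow> commutator G a g \<in> carrier G"
  unfolding commutator_def by simp

lemma (in group) commutator_eq_one_iff:
  assumes "a \<in> carrier G" "g \<in> carrier G"
  shows "commutator G a g = \<one> \<longleftrightarrow> a \<otimes> g = g \<otimes> a"
proof -
  have "commutator G a g = inv (g \<otimes> a) \<otimes> (a \<otimes> g)"
    using assms by (simp add: commutator_def inv_mult_group m_assoc)
  then show ?thesis
    using assms by (simp add: inv_solve_left')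
qed

lemma (in group_hom) hom_commutator:
  "a \<in> carrier G \<Longrightarrow> g \<in> carrier G \<Longrightarrow> h (commutator G a g) = commutator H (h a) (h g)"
  unfolding commutator_def by simp

lemma (in normal) commutator_mem_right:
  assumes "a \<in> carrier G" "n \<in> H"
  shows "commutator G a n \<in> H"
proof -
  have "inv a \<otimes> inv n \<otimes> inv (inv a) \<in> H"
    using assms by (meson inv_closed inv_op_closed2 subgroup.m_inv_closed subgroup_axioms)
  then show ?thesis
    using assms unfolding commutator_def by simp
qed

lemma (in group) commutator_mem_conjclass_mult:
  assumes "a \<in> carrier G" "g \<in> carrier G"
  shows "commutator G a g \<in> conjclass G a <#> conjclass G (inv a)"
proof -
  have "inv (g \<otimes> a) \<otimes> a \<otimes> (g \<otimes> a) \<in> conjclass G a"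
    using assms unfolding conjclass_def by blast
  moreover have "inv \<one> \<otimes> inv a \<otimes> \<one> \<in> conjclass G (inv a)"
    unfolding conjclass_def by blast
  moreover have "commutator G a g = (inv (g \<otimes> a) \<otimes> a \<otimes> (g \<otimes> a)) \<otimes> (inv \<one> \<otimes> inv a \<otimes> \<one>)"
    using assms by (simp add: commutator_def inv_mult_group m_assoc)
  ultimately show ?thesis
    by (simp only: set_mult_memI)
qed

lemma (in group) conjclass_subset_carrier:
  "x \<in> carrier G \<Longrightarrow> conjclass G x \<subseteq> carrier G"
  unfolding conjclass_def by auto

lemma (in group) conjclass_self:
  assumes "x \<in> carrier G"
  shows "x \<in> conjclass G x"
proof -
  have "x = inv \<one> \<otimes> x \<otimes> \<one>"
    using assms by simp
  then show ?thesis
    unfolding conjclass_def by blast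
qed

lemma (in group) conjclass_one [simp]: "conjclass G \<one> = {\<one>}"
  unfolding conjclass_def by (auto intro: exI[where x = \<one>])

lemma (in group) one_mem_conjclass_mult:
  assumes "a \<in> carrier G"
  shows "\<one> \<in> conjclass G a <#> conjclass G (inv a)"
proof -
  have "a \<otimes> inv a \<in> conjclass G a <#> conjclass G (inv a)"
    using assms by (intro set_mult_memI conjclass_self) simp_all
  then show ?thesis
    using assms by simp
qed

lemma (in group_hom) image_conjclass:
  assumes surj: "h ` carrier G = carrier H" and x: "x \<in> carrier G"
  shows "h ` conjclass G x = conjclass H (h x)"
proof -
  have "h ` conjclass G x = (\<lambda>g. inv\<^bsub>H\<^esub> (h g) \<otimes>\<^bsub>H\<^esub> h x \<otimes>\<^bsub>H\<^esub> h g) ` carrier G"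
    unfolding conjclass_def Setcompr_eq_image image_image using x by (intro image_cong) auto
  also have "\<dots> = conjclass H (h x)"
    unfolding conjclass_def by (auto simp flip: surj)
  finally show ?thesis .
qed

lemma (in group_hom) image_conjclass_mult:
  assumes surj: "h ` carrier G = carrier H" and "x \<in> carrier G" "y \<in> carrier G"
  shows "h ` (conjclass G x <#> conjclass G y) = conjclass H (h x) <#>\<^bsub>H\<^esub> conjclass H (h y)"
  using assms by (simp add: set_mult_hom[OF homh] G.conjclass_subset_carrier image_conjclass)

lemma (in normal) group_hom_r_coset_Mod: "group_hom G (G Mod H) ((#>) H)"
  by (simp add: group_hom_def group_hom_axioms_def is_group factorgroup_is_group r_coset_hom_Mod)

lemma (in normal) kernel_r_coset_Mod: "kernel G (G Mod H) ((#>) H) = H"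
  unfolding kernel_def using coset_join1 rcos_const subgroup_axioms by (auto simp: is_group)

lemma (in group) subgroup_centralizer:
  assumes a: "a \<in> carrier G"
  shows "subgroup (centralizer G a) G"
proof (rule subgroupI)
  fix x y assume "x \<in> centralizer G a" and "y \<in> centralizer G a"
  then have x: "x \<in> carrier G" "a \<otimes> x = x \<otimes> a" and y: "y \<in> carrier G" "a \<otimes> y = y \<otimes> a"
    by (auto simp: centralizer_def)
  have "a \<otimes> inv x = inv x \<otimes> (x \<otimes> a) \<otimes> inv x"
    using a x by (simp add: m_assoc[symmetric])
  also have "\<dots> = inv x \<otimes> a"
    using a x by (simp flip: x(2) add: m_assoc)
  finally show "inv x \<in> centralizer G a"
    using x by (simp add: centralizer_def)
  have "a \<otimes> (x \<otimes> y) = x \<otimes> (a \<otimes> y)"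
    using a x by (simp flip: m_assoc add: y(1))
  also have "\<dots> = x \<otimes> y \<otimes> a"
    using a x y by (simp add: m_assoc)
  finally show "x \<otimes> y \<in> centralizer G a"
    using x y by (simp add: centralizer_def)
qed (use a in \<open>auto simp: centralizer_def\<close>)

lemma (in group_hom) hom_mem_centralizer_iff:
  assumes "a \<in> carrier G" "x \<in> carrier G"
  shows "h x \<in> centralizer H (h a) \<longleftrightarrow> commutator G a x \<in> kernel G H h"
  using assms
  by (simp add: centralizer_def kernel_def hom_commutator H.commutator_eq_one_iff)

lemma (in group_hom) inj_on_image_conjclasses:
  assumes fin: "finite (carrier G)" and surj: "h ` carrier G = carrier H"
    and S: "S \<subseteq> carrier G" and eta: "eta_count H (h ` S) = eta_count G S"
  shows "inj_on ((`) h) (conjclass G ` S)"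
proof (rule eq_card_imp_inj_on)
  have "conjclass G ` S \<subseteq> Pow (carrier G)"
    using S G.conjclass_subset_carrier by blast
  then show "finite (conjclass G ` S)"
    using fin finite_subset by blast
  have "conjclass H (h x) = h ` conjclass G x" if "x \<in> S" for x
    using that S image_conjclass[OF surj] by blast
  then have "conjclass H ` h ` S = (`) h ` conjclass G ` S"
    unfolding image_image by (rule image_cong[OF refl])
  then show "card ((`) h ` conjclass G ` S) = card (conjclass G ` S)"
    using eta unfolding eta_count_def Setcompr_eq_image by simp
qed

lemma (in group_hom) kernel_inter_eq_one_if_eta_count_eq:
  assumes fin: "finite (carrier G)" and surj: "h ` carrier G = carrier H"
    and S: "S \<subseteq> carrier G" "\<one> \<in> S" and eta: "eta_count H (h ` S) = eta_count G S"
  shows "S \<inter> kernel G H h = {\<one>}"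
proof -
  have "c = \<one>" if c: "c \<in> S" "c \<in> kernel G H h" for c
  proof -
    have cG: "c \<in> carrier G" and hc: "h c = \<one>\<^bsub>H\<^esub>"
      using c by (auto simp: kernel_def)
    have "h ` conjclass G c = h ` conjclass G \<one>"
      using cG hc by (simp only: image_conjclass[OF surj] G.one_closed hom_one)
    then have "conjclass G c = conjclass G \<one>"
      by (rule inj_onD[OF inj_on_image_conjclasses[OF fin surj S(1) eta] _ imageI imageI]) (fact c(1) S(2))+
    then show "c = \<one>"
      using G.conjclass_self[OF cG] by simp
  qed
  moreover have "\<one> \<in> kernel G H h"
    by (simp add: kernel_def)
  ultimately show ?thesis
    using S(2) by blast
qed

lemma (in normal) centralizer_eq_if_eta_count_eq:
  assumes fin: "finite (carrier G)" and a: "a \<in> carrier G"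
    and eta: "eta_count (G Mod H) (conjclass (G Mod H) (H #> a)
                <#>\<^bsub>G Mod H\<^esub> conjclass (G Mod H) (inv\<^bsub>G Mod H\<^esub> (H #> a)))
              = eta_count G (conjclass G a <#> conjclass G (inv a))"
  shows "centralizer G a = {g \<in> carrier G. commutator G a g \<in> H}"
proof -
  interpret Q: group_hom G "G Mod H" "(#>) H"
    by (rule group_hom_r_coset_Mod)
  have surj: "(#>) H ` carrier G = carrier (G Mod H)"
    by (simp add: carrier_FactGroup)
  define S where "S = conjclass G a <#> conjclass G (inv a)"
  have S: "S \<subseteq> carrier G" "\<one> \<in> S"
    unfolding S_def using a by (simp_all add: setmult_subset_G conjclass_subset_carrier one_mem_conjclass_mult)
  have "(#>) H ` S = conjclass (G Mod H) (H #> a)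
                <#>\<^bsub>G Mod H\<^esub> conjclass (G Mod H) (inv\<^bsub>G Mod H\<^esub> (H #> a))"
    unfolding S_def using a by (simp add: Q.image_conjclass_mult[OF surj])
  then have "S \<inter> H = {\<one>}"
    using Q.kernel_inter_eq_one_if_eta_count_eq[OF fin surj S] eta
    by (simp add: S_def kernel_r_coset_Mod)
  moreover have "commutator G a g \<in> S" if "g \<in> carrier G" for g
    unfolding S_def using a that by (rule commutator_mem_conjclass_mult)
  ultimately have "commutator G a g \<in> H \<longleftrightarrow> commutator G a g = \<one>" if "g \<in> carrier G" for g
    using that by blast
  then show ?thesis
    using a by (auto simp: centralizer_def commutator_eq_one_iff)
qed

lemma (in group) mem_core_iff:
  assumes K: "K \<subseteq> carrier G" and g: "g \<in> carrier G"
  shows "g \<in> core G K \<longleftrightarrow> (\<forall>y\<in>carrier G. y \<otimes> g \<otimes> inv y \<in> K)"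
proof -
  have "g \<in> inv y <# K #> y \<longleftrightarrow> y \<otimes> g \<otimes> inv y \<in> K" if y: "y \<in> carrier G" for y
  proof -
    have "g \<in> inv y <# K #> y \<longleftrightarrow> (\<exists>k\<in>K. g = inv y \<otimes> k \<otimes> y)"
      unfolding l_coset_def r_coset_def by blast
    also have "\<dots> \<longleftrightarrow> (\<exists>k\<in>K. y \<otimes> g \<otimes> inv y = k)"
    proof (intro bex_cong refl iffI)
      fix k assume "k \<in> K"
      then have k: "k \<in> carrier G"
        using K by blast
      show "y \<otimes> g \<otimes> inv y = k" if "g = inv y \<otimes> k \<otimes> y"
        using that k y by (simp add: m_assoc) (simp flip: m_assoc)
      show "g = inv y \<otimes> k \<otimes> y" if "y \<otimes> g \<otimes> inv y = k"
        using that[symmetric] g y by (simp add: m_assoc) (simp flip: m_assoc)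
    qed
    finally show ?thesis
      by blast
  qed
  then show ?thesis
    unfolding core_def by blast
qed

lemma (in group) core_subset:
  assumes "K \<subseteq> carrier G"
  shows "core G K \<subseteq> K"
proof -
  have "inv \<one> <# K #> \<one> = K"
    using assms by (simp add: lcos_mult_one)
  then show ?thesis
    unfolding core_def by blast
qed

lemma (in group) normal_core:
  assumes K: "subgroup K G"
  shows "core G K \<lhd> G"
proof (rule normal_invI)
  show "subgroup (core G K) G"
    unfolding core_def using K by (auto intro!: subgroups_Inter subgroup_conjugation_is_surj1)
  have KG: "K \<subseteq> carrier G"
    using K subgroup.subset by blast
  fix x h assume x: "x \<in> carrier G" and h: "h \<in> core G K"
  then have hG: "h \<in> carrier G"
    using core_subset[OF KG] KG by blast
  have "y \<otimes> (x \<otimes> h \<otimes> inv x) \<otimes> inv y \<in> K" if y: "y \<in> carrier G" for y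
  proof -
    have "(y \<otimes> x) \<otimes> h \<otimes> inv (y \<otimes> x) \<in> K"
      using h x y mem_core_iff[OF KG hG] by simp
    then show ?thesis
      using x y hG by (simp add: inv_mult_group m_assoc)
  qed
  then show "x \<otimes> h \<otimes> inv x \<in> core G K"
    using x hG by (simp add: mem_core_iff[OF KG])
qed

lemma (in group_hom) core_vimage:
  assumes surj: "h ` carrier G = carrier H" and K: "K \<subseteq> carrier H"
  shows "core G (h -` K \<inter> carrier G) = h -` core H K \<inter> carrier G"
proof -
  have "g \<in> core G (h -` K \<inter> carrier G) \<longleftrightarrow> h g \<in> core H K" if g: "g \<in> carrier G" for g
  proof -
    have "g \<in> core G (h -` K \<inter> carrier G) \<longleftrightarrow> (\<forall>y\<in>carrier G. h y \<otimes>\<^bsub>H\<^esub> h g \<otimes>\<^bsub>H\<^esub> inv\<^bsub>H\<^esub> h y \<in> K)"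
      using g by (simp add: G.mem_core_iff)
    also have "\<dots> \<longleftrightarrow> (\<forall>z\<in>carrier H. z \<otimes>\<^bsub>H\<^esub> h g \<otimes>\<^bsub>H\<^esub> inv\<^bsub>H\<^esub> z \<in> K)"
      by (simp flip: surj)
    also have "\<dots> \<longleftrightarrow> h g \<in> core H K"
      using g K by (simp add: H.mem_core_iff)
    finally show ?thesis .
  qed
  moreover have "core G (h -` K \<inter> carrier G) \<subseteq> carrier G"
    using G.core_subset by blast
  ultimately show ?thesis
    by blast
qed

lemma (in group_hom) FactGroup_core_vimage_iso:
  assumes surj: "h ` carrier G = carrier H" and K: "subgroup K H"
  shows "G Mod core G (h -` K \<inter> carrier G) \<cong> H Mod core H K"
proof -
  interpret C: normal "core H K" H
    using H.normal_core[OF K] .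
  interpret hom: group_hom G "H Mod core H K" "(#>\<^bsub>H\<^esub>) (core H K) \<circ> h"
    by (simp add: group_hom_def group_hom_axioms_def C.factorgroup_is_group
        Group.hom_compose[OF homh C.r_coset_hom_Mod])
  have "kernel G (H Mod core H K) ((#>\<^bsub>H\<^esub>) (core H K) \<circ> h) = h -` core H K \<inter> carrier G"
    using C.kernel_r_coset_Mod by (auto simp: kernel_def)
  moreover have "((#>\<^bsub>H\<^esub>) (core H K) \<circ> h) ` carrier G = carrier (H Mod core H K)"
    unfolding carrier_FactGroup image_comp[symmetric] surj by (rule refl)
  ultimately show ?thesis
    using hom.FactGroup_iso core_vimage[OF surj subgroup.subset[OF K]] by simp
qed

lemma derived_length_iso:
  assumes G: "group G" and H: "group H" and iso: "G \<cong> H"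
  shows "derived_length G = derived_length H"
proof -
  obtain f where f: "f \<in> iso G H"
    using iso unfolding is_iso_def by blast
  interpret group_hom G H f
    using G H f by (simp add: group_hom_def group_hom_axioms_def iso_def)
  have surj: "f ` carrier G = carrier H" and inj: "inj_on f (carrier G)"
    using f by (auto simp: iso_def bij_betw_def)
  have "(derived H ^^ n) (carrier H) = {\<one>\<^bsub>H\<^esub>} \<longleftrightarrow> (derived G ^^ n) (carrier G) = {\<one>\<^bsub>G\<^esub>}" for n
  proof -
    have "(derived H ^^ n) (carrier H) = {\<one>\<^bsub>H\<^esub>}
        \<longleftrightarrow> f ` (derived G ^^ n) (carrier G) = f ` {\<one>\<^bsub>G\<^esub>}"
      using exp_of_derived_img[of "carrier G" n] surj by simp
    also have "\<dots> \<longleftrightarrow> (derived G ^^ n) (carrier G) = {\<one>\<^bsub>G\<^esub>}"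
      by (rule inj_on_image_eq_iff[OF inj]) (simp_all add: G.exp_of_derived_in_carrier)
    finally show ?thesis .
  qed
  then show ?thesis
    unfolding derived_length_def by simp
qed

theorem lemma4p5:
  fixes G :: "('a, 'b) monoid_scheme" and N :: "'a set" and a :: 'a
  assumes "group G" and "finite (carrier G)" and "solvable G"
    and "minimal_normal N G"
    and "a \<in> carrier G"
    and "eta_count (G Mod N) (conjclass (G Mod N) (N #>\<^bsub>G\<^esub> a)
            <#>\<^bsub>G Mod N\<^esub> conjclass (G Mod N) (inv\<^bsub>G Mod N\<^esub> (N #>\<^bsub>G\<^esub> a)))
         = eta_count G (conjclass G a <#>\<^bsub>G\<^esub> conjclass G (inv\<^bsub>G\<^esub> a))"
  shows "N \<subseteq> centralizer G a
    \<and> centralizer G a = {g \<in> carrier G. commutator G a g \<in> N}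
    \<and> derived_length (G Mod core G (centralizer G a))
      = derived_length ((G Mod N) Mod core (G Mod N) (centralizer (G Mod N) (N #>\<^bsub>G\<^esub> a)))"
proof -
  interpret normal N G
    using assms(4) by (simp add: minimal_normal_def)
  interpret Q: group_hom G "G Mod N" "(#>\<^bsub>G\<^esub>) N"
    by (rule group_hom_r_coset_Mod)
  have surj: "(#>\<^bsub>G\<^esub>) N ` carrier G = carrier (G Mod N)"
    by (simp add: carrier_FactGroup)
  have aQ: "N #>\<^bsub>G\<^esub> a \<in> carrier (G Mod N)"
    using assms(5) surj by blast
  have cen: "centralizer G a = {g \<in> carrier G. commutator G a g \<in> N}"
    using centralizer_eq_if_eta_count_eq[OF assms(2,5,6)] .
  have N_sub: "N \<subseteq> centralizer G a"
    using cen assms(5) commutator_mem_right subset by blast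
  have "(#>\<^bsub>G\<^esub>) N -` centralizer (G Mod N) (N #>\<^bsub>G\<^esub> a) \<inter> carrier G = centralizer G a"
    using cen Q.hom_mem_centralizer_iff[OF assms(5)] by (auto simp: kernel_r_coset_Mod)
  then have iso: "G Mod core G (centralizer G a)
      \<cong> (G Mod N) Mod core (G Mod N) (centralizer (G Mod N) (N #>\<^bsub>G\<^esub> a))"
    using Q.FactGroup_core_vimage_iso[OF surj Q.H.subgroup_centralizer[OF aQ]] by simp
  show ?thesis
    using N_sub cen derived_length_iso[OF _ _ iso]
      normal.factorgroup_is_group[OF normal_core[OF subgroup_centralizer[OF assms(5)]]]
      normal.factorgroup_is_group[OF Q.H.normal_core[OF Q.H.subgroup_centralizer[OF aQ]]]
    by blast
qed

end
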